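(* The power series $[\sqrt2]_q$, $[\sqrt3]_q$, $[\sqrt5]_q$, $[\sqrt7]_q\in\mathbb{Z}[[q]]$ satisfy $$\begin{aligned} q^2[\sqrt2]_q^2-(q^3-1)[\sqrt2]_q&=q^2+1,\\ q^2[\sqrt3]_q^2-(q^3+q^2-q-1)[\sqrt3]_q&=q^2+q+1,\\ q^3[\sqrt5]_q^2-(q^5+q^3-q^2-1)[\sqrt5]_q&=q^4+q^3+q^2+q+1,\\ q^3[\sqrt7]_q^2-(q^5+q^4-q-1)[\sqrt7]_q&=q^4+2q^3+q^2+2q+1. \end{aligned}$$
   Context: For an integer $a\geq1$ put $[a]_q=1+q+\cdots+q^{a-1}$ and $[a]_{q^{-1}}=1+q^{-1}+\cdots+q^{-(a-1)}$. Every rational number $r/s>1$ has a unique even-length regular continued fraction $r/s=[a_1,\ldots,a_{2m}]$ with $a_i\in\mathbb{Z}_{\geq1}$. Its $q$-deformation is the rational function $$\left[\tfrac{r}{s}\right]_q=[a_1]_q+\cfrac{q^{a_1}}{[a_2]_{q^{-1}}+\cfrac{q^{-a_2}}{[a_3]_q+\cfrac{q^{a_3}}{\ddots+\cfrac{q^{a_{2m-1}}}{[a_{2m}]_{q^{-1}}}}}}.$$ One also sets $[1]_q=1$. Each $[r/s]_q$ is identified with its Taylor expansion at $q=0$. For an irrational real number $x>1$ with continued fraction $x=[a_1,a_2,\ldots]$ and convergents $x_n=[a_1,\ldots,a_n]$, define $$[x]_q:=\sum_{k\geq0}\varkappa_kq^k,\qquad \varkappa_k=\lim_{n\to\infty}\bigl(\text{coefficient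 of }q^k\text{ in }[x_n]_q\bigr).$$ These limits exist and are eventually attained. The continued fractions are $\sqrt2=[1,\overline{2}]$, $\sqrt3=[1,\overline{1,2}]$, $\sqrt5=[2,\overline{4}]$ and $\sqrt7=[2,\overline{1,1,1,4}]$, where the bar denotes the periodically repeated block. *)

theory Defs
  imports "HOL-Analysis.Analysis" "HOL-Computational_Algebra.Formal_Laurent_Series"
begin

fun cf_val :: "nat list \<Rightarrow> rat" where
  "cf_val [] = 0"
| "cf_val [a] = of_nat a"
| "cf_val (a # l) = of_nat a + 1 / cf_val l"

definition qint :: "bool \<Rightarrow> nat \<Rightarrow> real fls" where
  "qint b a = (\<Sum>i<a. (if b then fls_X else fls_X_inv) ^ i)"

definition qpow :: "bool \<Rightarrow> nat \<Rightarrow> real fls" where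
  "qpow b a = (if b then fls_X else fls_X_inv) ^ a"

text \<open>The q-deformed continued fraction
  [a_1]_q + q^{a_1}/([a_2]_{q^{-1}} + q^{-a_2}/([a_3]_q + ...)),
  evaluated in the field of formal Laurent series (which contains the rational functions
  via their expansions at q = 0).\<close>
fun qcf :: "bool \<Rightarrow> nat list \<Rightarrow> real fls" where
  "qcf b [] = 0"
| "qcf b [a] = qint b a"
| "qcf b (a # l) = qint b a + qpow b a / qcf (\<not> b) l"

text \<open>[r/s]_q for a rational r/s \<ge> 1, via its unique even-length continued fraction.\<close>
definition qrat :: "rat \<Rightarrow> real fls" where
  "qrat r = (if r = 1 then 1 else
     qcf True (THE l. l \<noteq> [] \<and> even (length l) \<and> (\<forall>a\<in>set l. a \<ge> 1) \<and> cf_val l = r))"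

fun cf_rem :: "real \<Rightarrow> nat \<Rightarrow> real" where
  "cf_rem x 0 = x"
| "cf_rem x (Suc n) = 1 / (cf_rem x n - of_int \<lfloor>cf_rem x n\<rfloor>)"

definition cf_terms :: "real \<Rightarrow> nat \<Rightarrow> nat" where
  "cf_terms x i = nat \<lfloor>cf_rem x i\<rfloor>"

text \<open>n-th convergent x_n = [a_1,...,a_n] (n \<ge> 1).\<close>
definition convergent_cf :: "real \<Rightarrow> nat \<Rightarrow> rat" where
  "convergent_cf x n = cf_val (map (cf_terms x) [0..<n])"

text \<open>[x]_q for irrational x > 1: coefficientwise limit of [x_n]_q.\<close>
definition qreal :: "real \<Rightarrow> real fps" where
  "qreal x = Abs_fps (\<lambda>k. lim (\<lambda>n. fls_nth (qrat (convergent_cf x (Suc n))) (int k)))"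

end

theory Submission
  imports Defs
begin

text \<open>
  Let x = [a; b_1, ..., b_m, b_1, ..., b_m, ...] with m even. The q-deformed convergents [x_n]_q
  agree with [x]_q below order n - 2, because each pair of levels of the q-continued fraction
  (one at q, one at q^-1) pushes a change of the tail up by at least two orders. Write
  [x_n]_q = [a]_q + q^a / w with w the tail at level q^-1; the convergent one period later has
  the same shape with tail u, and the period relates u to w by a Moebius transformation. For the
  quadratic Q of the proposition, g Q([x_n]_q) is an explicit multiple of w - u, hence of
  [x_(n+m)]_q - [x_n]_q, for a fixed Laurent polynomial g. So Q([x_n]_q) vanishes below order
  n - 2, and Q([x]_q) = 0.
\<close>

definition vanishes_below :: "int \<Rightarrow> 'a::zero fls \<Rightarrow> bool" where
  "vanishes_below N f \<longleftrightarrow> (\<forall>k<N. fls_nth f k = 0)"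

lemma vanishes_below_iff: "vanishes_below N f \<longleftrightarrow> f = 0 \<or> N \<le> fls_subdegree f"
proof
  assume "vanishes_below N f"
  then show "f = 0 \<or> N \<le> fls_subdegree f"
    unfolding vanishes_below_def by (auto intro: fls_subdegree_geI)
next
  assume "f = 0 \<or> N \<le> fls_subdegree f"
  then show "vanishes_below N f"
    unfolding vanishes_below_def by auto
qed

lemma vanishes_below_zero [simp]: "vanishes_below N 0"
  unfolding vanishes_below_def by simp

lemma vanishes_below_mono: "vanishes_below N f \<Longrightarrow> M \<le> N \<Longrightarrow> vanishes_below M f"
  unfolding vanishes_below_def by auto

lemma vanishes_below_subdegree: "vanishes_below (fls_subdegree f) f"
  unfolding vanishes_below_def by auto

lemma vanishes_below_fps_to_fls: "vanishes_below 0 (fps_to_fls f)"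
  unfolding vanishes_below_def by auto

lemma vanishes_below_add:
  "vanishes_below N f \<Longrightarrow> vanishes_below N g \<Longrightarrow> vanishes_below N (f + g)"
  unfolding vanishes_below_def by auto

lemma vanishes_below_diff:
  "vanishes_below N f \<Longrightarrow> vanishes_below N g \<Longrightarrow> vanishes_below N (f - g)"
  unfolding vanishes_below_def by auto

lemma vanishes_below_uminus_iff [simp]: "vanishes_below N (- f) \<longleftrightarrow> vanishes_below N f"
  unfolding vanishes_below_def by auto

lemma vanishes_below_mult:
  fixes f g :: "'a::idom fls"
  shows "vanishes_below N f \<Longrightarrow> vanishes_below M g \<Longrightarrow> vanishes_below (N + M) (f * g)"
  unfolding vanishes_below_iff by (cases "f = 0 \<or> g = 0") auto

lemma vanishes_below_inverse: "vanishes_below (- fls_subdegree f) (inverse (f :: 'a::field fls))"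
  using vanishes_below_subdegree[of "inverse f"] by simp

lemma vanishes_below_eq_0: "(\<And>N. vanishes_below N f) \<Longrightarrow> f = 0"
proof (rule ccontr)
  assume "\<And>N. vanishes_below N f" "f \<noteq> 0"
  then have "fls_subdegree f + 1 \<le> fls_subdegree f"
    unfolding vanishes_below_iff by blast
  then show False by simp
qed

lemma vanishes_below_cancel:
  fixes f g :: "'a::field fls"
  assumes "vanishes_below N (f * g)" "fls_nth g k \<noteq> 0"
  shows "vanishes_below (N - k) f"
proof -
  have "vanishes_below (N + - k) (f * g * inverse g)"
    using assms fls_subdegree_leI[OF assms(2)]
    by (intro vanishes_below_mult vanishes_below_mono[OF vanishes_below_inverse]) auto
  moreover have "g \<noteq> 0"
    using assms(2) by auto
  ultimately show ?thesis
    by (simp add: mult.assoc)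
qed

lemma vanishes_below_divide_diff:
  fixes c y y' :: "'a::field fls"
  assumes "y \<noteq> 0" "y' \<noteq> 0" "vanishes_below N (y - y')"
  shows "vanishes_below (N + fls_subdegree c - fls_subdegree y - fls_subdegree y') (c / y - c / y')"
proof -
  have "vanishes_below N (y' - y)"
    using assms(3) vanishes_below_uminus_iff[of N "y - y'"] by simp
  then have "vanishes_below (fls_subdegree c + N + - fls_subdegree y + - fls_subdegree y')
      (c * (y' - y) * inverse y * inverse y')"
    by (intro vanishes_below_mult vanishes_below_subdegree vanishes_below_inverse)
  moreover have "c * (y' - y) * inverse y * inverse y' = c / y - c / y'"
    using assms(1,2) by (simp add: field_simps)
  ultimately show ?thesis
    by (auto elim: vanishes_below_mono)
qed

lemma fls_nth_qint_True: "fls_nth (qint True a) k = (if 0 \<le> k \<and> k < int a then 1 else 0)"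
  by (induction a) (auto simp: qint_def)

lemma fls_nth_qint_False: "fls_nth (qint False a) k = (if - int a < k \<and> k \<le> 0 then 1 else 0)"
  by (induction a) (auto simp: qint_def)

lemma qint_Suc: "qint b (Suc a) = qint b a + qpow b a"
  by (simp add: qint_def qpow_def)

lemma qpow_nonzero [simp]: "qpow b a \<noteq> 0"
  by (cases b) (simp_all add: qpow_def)

lemma fls_subdegree_qpow [simp]: "fls_subdegree (qpow b a) = (if b then int a else - int a)"
  by (cases b) (simp_all add: qpow_def)

lemma qint_True_nonzero: "1 \<le> a \<Longrightarrow> qint True a \<noteq> 0"
  using fls_nth_qint_True[of a 0] by auto

lemma fls_subdegree_qint_True: "1 \<le> a \<Longrightarrow> fls_subdegree (qint True a) = 0"
  by (rule fls_subdegree_eqI) (auto simp: fls_nth_qint_True)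

lemma qint_False_nonzero: "1 \<le> a \<Longrightarrow> qint False a \<noteq> 0"
  using fls_nth_qint_False[of a 0] by auto

lemma fls_subdegree_qint_False: "1 \<le> a \<Longrightarrow> fls_subdegree (qint False a) = 1 - int a"
  by (rule fls_subdegree_eqI) (auto simp: fls_nth_qint_False)

lemma qcf_Cons: "l \<noteq> [] \<Longrightarrow> qcf b (a # l) = qint b a + qpow b a / qcf (\<not> b) l"
  by (cases l) auto

lemma qcf_level_q:
  assumes "1 \<le> a" "y \<noteq> 0" "fls_subdegree y \<le> 0"
  shows "qint True a + qpow True a / y \<noteq> 0" "fls_subdegree (qint True a + qpow True a / y) = 0"
proof -
  have y: "0 < fls_subdegree (qpow True a / y)"
    using assms by (simp add: fls_divide_subdegree)
  then have "fls_nth (qint True a + qpow True a / y) 0 = 1"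
    using assms(1) by (simp add: fls_nth_qint_True)
  then show "qint True a + qpow True a / y \<noteq> 0"
    by (intro notI) simp
  have "fls_subdegree (qint True a + qpow True a / y) = fls_subdegree (qint True a)"
    by (rule fls_subdegree_add_eq1) (use y assms(1) in \<open>simp_all add: qint_True_nonzero fls_subdegree_qint_True\<close>)
  then show "fls_subdegree (qint True a + qpow True a / y) = 0"
    using assms(1) by (simp add: fls_subdegree_qint_True)
qed

lemma qcf_level_q_inv:
  assumes "1 \<le> a" "y \<noteq> 0" "fls_subdegree y = 0"
  shows "qint False a + qpow False a / y \<noteq> 0" "fls_subdegree (qint False a + qpow False a / y) = - int a"
proof -
  have "fls_subdegree (qpow False a / y) < fls_subdegree (qint False a)"
    using assms by (simp add: fls_divide_subdegree fls_subdegree_qint_False)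
  then show subdegree: "fls_subdegree (qint False a + qpow False a / y) = - int a"
    using assms by (simp add: fls_subdegree_add_eq2 fls_divide_subdegree)
  show "qint False a + qpow False a / y \<noteq> 0"
    using subdegree assms(1) by auto
qed

lemma qcf_nonzero_subdegree:
  assumes "l \<noteq> []" "\<forall>a\<in>set l. 1 \<le> a"
  shows "qcf True l \<noteq> 0 \<and> fls_subdegree (qcf True l) = 0 \<and>
    qcf False l \<noteq> 0 \<and> fls_subdegree (qcf False l) \<le> 0 \<and>
    (tl l \<noteq> [] \<longrightarrow> fls_subdegree (qcf False l) = - int (hd l))"
  using assms
proof (induction l)
  case (Cons a l)
  show ?case
  proof (cases "l = []")
    case True
    then show ?thesis
      using Cons.prems
      by (simp add: qint_True_nonzero fls_subdegree_qint_True qint_False_nonzero fls_subdegree_qint_False)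
  next
    case False
    with Cons have "qcf True l \<noteq> 0" "fls_subdegree (qcf True l) = 0"
      "qcf False l \<noteq> 0" "fls_subdegree (qcf False l) \<le> 0" "1 \<le> a"
      by auto
    then show ?thesis
      using False qcf_level_q[of a "qcf False l"] qcf_level_q_inv[of a "qcf True l"]
      by (simp add: qcf_Cons)
  qed
qed simp

lemma qcf_nonzero: "l \<noteq> [] \<Longrightarrow> \<forall>a\<in>set l. 1 \<le> a \<Longrightarrow> qcf b l \<noteq> 0"
  using qcf_nonzero_subdegree[of l] by (cases b) auto

lemma fls_subdegree_qcf_True: "l \<noteq> [] \<Longrightarrow> \<forall>a\<in>set l. 1 \<le> a \<Longrightarrow> fls_subdegree (qcf True l) = 0"
  using qcf_nonzero_subdegree[of l] by auto

lemma fls_subdegree_qcf_False_Cons: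
  "l \<noteq> [] \<Longrightarrow> \<forall>b\<in>set (a # l). 1 \<le> b \<Longrightarrow> fls_subdegree (qcf False (a # l)) = - int a"
  using qcf_nonzero_subdegree[of "a # l"] by auto

lemma qcf_Cons_mult:
  "l \<noteq> [] \<Longrightarrow> \<forall>a\<in>set l. 1 \<le> a \<Longrightarrow>
    qcf b (a # l) * qcf (\<not> b) l = qint b a * qcf (\<not> b) l + qpow b a"
  using qcf_nonzero[of l "\<not> b"] by (simp add: qcf_Cons field_simps)

text \<open>Induction over pairs of levels (at q, then at q^{-1}): such a pair with partial quotients
  a, b improves the order of agreement by a + b \<ge> 2.\<close>

lemma vanishes_below_qcf_append:
  assumes "even (length p)" "\<forall>a\<in>set p. 1 \<le> a"
    and "r \<noteq> []" "r' \<noteq> []" "\<forall>a\<in>set r. 1 \<le> a" "\<forall>a\<in>set r'. 1 \<le> a"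
    and "vanishes_below N (qcf True r - qcf True r')"
  shows "vanishes_below (N + int (length p)) (qcf True (p @ r) - qcf True (p @ r'))"
  using assms(1,2,7)
proof (induction p arbitrary: N rule: induct_list012)
  case (3 a b p)
  let ?s = "p @ r" and ?s' = "p @ r'"
  have valid: "?s \<noteq> []" "?s' \<noteq> []" "\<forall>x\<in>set ?s. 1 \<le> x" "\<forall>x\<in>set ?s'. 1 \<le> x"
    using 3 assms(3-6) by auto
  have "vanishes_below (N + int (length p)) (qcf True ?s - qcf True ?s')"
    using 3 by simp
  from vanishes_below_divide_diff[OF qcf_nonzero qcf_nonzero this, of "qpow False b"]
  have "vanishes_below (N + int (length p) - int b) (qcf False (b # ?s) - qcf False (b # ?s'))"
    using valid by (simp add: qcf_Cons fls_subdegree_qcf_True)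
  from vanishes_below_divide_diff[OF qcf_nonzero qcf_nonzero this, of "qpow True a"]
  have "vanishes_below (N + int (length p) + int a + int b)
      (qpow True a / qcf False (b # ?s) - qpow True a / qcf False (b # ?s'))"
    using valid 3 by (simp add: fls_subdegree_qcf_False_Cons add.assoc)
  then have "vanishes_below (N + int (length p) + int a + int b) (qcf True (a # b # ?s) - qcf True (a # b # ?s'))"
    by simp
  then have "vanishes_below (N + int (length (a # b # p)))
      (qcf True (a # b # ?s) - qcf True (a # b # ?s'))"
    using 3 by (auto elim!: vanishes_below_mono)
  then show ?case
    by simp
qed simp_all

definition qconv :: "(nat \<Rightarrow> nat) \<Rightarrow> nat \<Rightarrow> real fls" where
  "qconv t n = qcf True (map t [0..<n])"

lemma fls_subdegree_qconv: "\<forall>i. 1 \<le> t i \<Longrightarrow> 1 \<le> n \<Longrightarrow> fls_subdegree (qconv t n) = 0"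
  unfolding qconv_def by (rule fls_subdegree_qcf_True) auto

text \<open>Split off the longest even prefix common to both convergents; the two remaining tails
  are q-continued fractions of subdegree 0.\<close>

lemma vanishes_below_qconv_Suc:
  assumes "\<forall>i. 1 \<le> t i" "1 \<le> n"
  shows "vanishes_below (int n - 2) (qconv t (Suc n) - qconv t n)"
proof -
  define m where "m = 2 * ((n - 1) div 2)"
  have m: "m < n" "int n - 2 \<le> int m" "even m"
    unfolding m_def using assms(2) by auto
  define p r r' where "p = map t [0..<m]" "r = map t [m..<n]" "r' = map t [m..<Suc n]"
  have split: "map t [0..<n] = p @ r" "map t [0..<Suc n] = p @ r'"
    unfolding p_r_r'_def using m(1) upt_add_eq_append[of 0 m]
    by (metis le_add_diff_inverse less_imp_le_nat map_append zero_le le_SucI)+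
  have valid: "r \<noteq> []" "r' \<noteq> []" "\<forall>a\<in>set r. 1 \<le> a" "\<forall>a\<in>set r'. 1 \<le> a" "\<forall>a\<in>set p. 1 \<le> a"
    using assms(1) m(1) unfolding p_r_r'_def by auto
  have "vanishes_below 0 (qcf True r' - qcf True r)"
    using valid by (intro vanishes_below_diff) (metis vanishes_below_subdegree fls_subdegree_qcf_True)+
  then have "vanishes_below (0 + int (length p)) (qcf True (p @ r') - qcf True (p @ r))"
    using valid m(3) by (intro vanishes_below_qcf_append) (simp_all add: p_r_r'_def)
  then show ?thesis
    using m(2) unfolding qconv_def split by (auto simp: p_r_r'_def elim: vanishes_below_mono)
qed

lemma vanishes_below_qconv_diff:
  assumes "\<forall>i. 1 \<le> t i" "1 \<le> n" "n \<le> m"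
  shows "vanishes_below (int n - 2) (qconv t m - qconv t n)"
  using assms(3)
proof (induction m rule: dec_induct)
  case (step m)
  have "vanishes_below (int n - 2) (qconv t (Suc m) - qconv t m)"
    using vanishes_below_qconv_Suc[OF assms(1), of m] assms(2) step(1)
    by (auto elim: vanishes_below_mono)
  from vanishes_below_add[OF this step(3)] show ?case
    by simp
qed simp

lemma cf_val_Cons: "l \<noteq> [] \<Longrightarrow> cf_val (a # l) = of_nat a + 1 / cf_val l"
  by (cases l) auto

lemma cf_val_gt_1: "l \<noteq> [] \<Longrightarrow> \<forall>a\<in>set l. 1 \<le> a \<Longrightarrow> l \<noteq> [1] \<Longrightarrow> 1 < cf_val l"
proof (induction l)
  case (Cons a l)
  show ?case
  proof (cases "l = []")
    case False
    then have "1 \<le> cf_val l"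
      using Cons by (cases "l = [1]") fastforce+
    then have "0 < 1 / cf_val l"
      by simp
    moreover have "(1::rat) \<le> of_nat a"
      using Cons.prems by simp
    moreover have "cf_val (a # l) = of_nat a + 1 / cf_val l"
      using False by (rule cf_val_Cons)
    ultimately show ?thesis
      by linarith
  qed (use Cons.prems in simp)
qed simp

lemma cf_val_Cons_short: "m = [] \<or> m = [1] \<Longrightarrow> cf_val (a # m) = of_nat (a + length m)"
  by auto

lemma cf_val_Cons_long:
  assumes "m \<noteq> []" "m \<noteq> [1]" "\<forall>b\<in>set m. 1 \<le> b"
  shows "\<lfloor>cf_val (a # m)\<rfloor> = int a" "cf_val (a # m) \<notin> \<int>"
proof -
  have frac: "0 < 1 / cf_val m" "1 / cf_val m < 1"
    using cf_val_gt_1[OF assms(1,3,2)] by auto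
  then show floor: "\<lfloor>cf_val (a # m)\<rfloor> = int a"
    using assms(1) by (simp add: cf_val_Cons floor_eq_iff)
  show "cf_val (a # m) \<notin> \<int>"
  proof
    assume "cf_val (a # m) \<in> \<int>"
    then obtain z where "cf_val (a # m) = of_int z"
      by (auto elim: Ints_cases)
    with floor have "cf_val (a # m) = of_nat a"
      by simp
    then show False
      using frac assms(1) by (simp add: cf_val_Cons)
  qed
qed

lemma cf_val_Cons_in_Ints_iff:
  assumes "\<forall>b\<in>set m. 1 \<le> b"
  shows "cf_val (a # m) \<in> \<int> \<longleftrightarrow> m = [] \<or> m = [1]"
proof
  assume "cf_val (a # m) \<in> \<int>"
  then show "m = [] \<or> m = [1]"
    using cf_val_Cons_long(2)[of m a] assms by blast
next
  assume "m = [] \<or> m = [1]"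
  then show "cf_val (a # m) \<in> \<int>"
    using cf_val_Cons_short[of m a] by simp
qed

text \<open>The value of a continued fraction determines the list up to the ambiguity
  [..., a, 1] = [..., a + 1], which the parity of the length resolves.\<close>

lemma cf_val_inj:
  assumes "l \<noteq> []" "l' \<noteq> []" "\<forall>a\<in>set l. 1 \<le> a" "\<forall>a\<in>set l'. 1 \<le> a"
    and "even (length l) = even (length l')" "cf_val l = cf_val l'"
  shows "l = l'"
  using assms
proof (induction l arbitrary: l')
  case (Cons a m)
  obtain a' m' where l': "l' = a' # m'"
    using Cons.prems(2) by (cases l') auto
  have m: "\<forall>b\<in>set m. 1 \<le> b" "\<forall>b\<in>set m'. 1 \<le> b" "cf_val (a # m) = cf_val (a' # m')"
    using Cons.prems(3,4,6) l' by auto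
  then have short_iff: "m = [] \<or> m = [1] \<longleftrightarrow> m' = [] \<or> m' = [1]"
    using cf_val_Cons_in_Ints_iff[OF m(1), of a] cf_val_Cons_in_Ints_iff[OF m(2), of a'] by simp
  show ?case
  proof (cases "m = [] \<or> m = [1]")
    case True
    then have "a + length m = a' + length m'" "length m = length m'"
      using short_iff m(3) Cons.prems(5) l' cf_val_Cons_short[of m a] cf_val_Cons_short[of m' a'] by auto
    then show ?thesis
      using True short_iff l' by auto
  next
    case False
    then have "a = a'"
      using short_iff m cf_val_Cons_long(1)[of m a] cf_val_Cons_long(1)[of m' a'] by auto
    then have "cf_val m = cf_val m'"
      using m(3) False short_iff by (simp add: cf_val_Cons)
    then show ?thesis
      using Cons.IH[of m'] Cons.prems False short_iff l' \<open>a = a'\<close> by auto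
  qed
qed simp

lemma cf_val_append_eq: "s \<noteq> [] \<Longrightarrow> s' \<noteq> [] \<Longrightarrow> cf_val s = cf_val s' \<Longrightarrow> cf_val (p @ s) = cf_val (p @ s')"
  by (induction p) (auto simp: cf_val_Cons)

lemma qcf_append_eq:
  "s \<noteq> [] \<Longrightarrow> s' \<noteq> [] \<Longrightarrow> (\<forall>b. qcf b s = qcf b s') \<Longrightarrow> qcf b (p @ s) = qcf b (p @ s')"
  by (induction p arbitrary: b) (auto simp: qcf_Cons)

lemma cf_val_append_1: "cf_val (p @ [a, 1]) = cf_val (p @ [Suc a])"
  by (rule cf_val_append_eq) auto

lemma qcf_append_1: "qcf b (p @ [a, 1]) = qcf b (p @ [Suc a])"
  by (rule qcf_append_eq) (auto simp: qint_Suc qint_def qpow_def)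

lemma even_length_cf_exists:
  assumes "l \<noteq> []" "\<forall>a\<in>set l. 1 \<le> a" "l \<noteq> [1]"
  obtains l' where "l' \<noteq> []" "even (length l')" "\<forall>a\<in>set l'. 1 \<le> a"
    "cf_val l' = cf_val l" "qcf True l' = qcf True l"
proof (cases "even (length l)")
  case False
  obtain p x where l: "l = p @ [x]"
    using assms(1) by (metis rev_exhaust)
  show ?thesis
  proof (cases "2 \<le> x")
    case True
    then have "Suc (x - 1) = x"
      by simp
    then show ?thesis
      using that[of "p @ [x - 1, 1]"] assms(2) False True cf_val_append_1[of p "x - 1"]
        qcf_append_1[of True p "x - 1"]
      unfolding l by auto
  next
    case False
    then have "x = 1" "p \<noteq> []"
      using assms l by auto
    then obtain p' y where "p = p' @ [y]"
      by (metis rev_exhaust)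
    then show ?thesis
      using that[of "p' @ [Suc y]"] assms(2) \<open>odd (length l)\<close> \<open>x = 1\<close>
        cf_val_append_1[of p' y] qcf_append_1[of True p' y]
      unfolding l by auto
  qed
qed (use assms in blast)

lemma qrat_cf_val:
  assumes "l \<noteq> []" "\<forall>a\<in>set l. 1 \<le> a"
  shows "qrat (cf_val l) = qcf True l"
proof (cases "l = [1]")
  case False
  then have "cf_val l \<noteq> 1"
    using cf_val_gt_1[OF assms False] by auto
  obtain l' where l': "l' \<noteq> []" "even (length l')" "\<forall>a\<in>set l'. 1 \<le> a"
    "cf_val l' = cf_val l" "qcf True l' = qcf True l"
    using even_length_cf_exists[OF assms False] by blast
  have "(THE l''. l'' \<noteq> [] \<and> even (length l'') \<and> (\<forall>a\<in>set l''. 1 \<le> a) \<and> cf_val l'' = cf_val l) = l'"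
  proof (rule the_equality)
    fix l'' assume "l'' \<noteq> [] \<and> even (length l'') \<and> (\<forall>a\<in>set l''. 1 \<le> a) \<and> cf_val l'' = cf_val l"
    then show "l'' = l'"
      using l' by (intro cf_val_inj) simp_all
  qed (use l' in simp)
  then show ?thesis
    using \<open>cf_val l \<noteq> 1\<close> l'(5) by (simp only: qrat_def if_False)
qed (simp add: qrat_def qint_def)

lemma qrat_convergent_cf:
  assumes "cf_terms x = t" "\<forall>i. 1 \<le> t i"
  shows "qrat (convergent_cf x (Suc n)) = qconv t (Suc n)"
  unfolding convergent_cf_def qconv_def assms(1) by (rule qrat_cf_val) (use assms(2) in auto)

lemma qreal_nth_eq_qconv:
  assumes "cf_terms x = t" "\<forall>i. 1 \<le> t i" "k + 3 \<le> N"
  shows "qreal x $ k = fls_nth (qconv t N) (int k)"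
proof -
  have "fls_nth (qrat (convergent_cf x (Suc n))) (int k) = fls_nth (qconv t N) (int k)"
    if "N \<le> n" for n
  proof -
    have "vanishes_below (int N - 2) (qconv t (Suc n) - qconv t N)"
      using vanishes_below_qconv_diff[OF assms(2)] that assms(3) by simp
    then show ?thesis
      using assms(3) qrat_convergent_cf[OF assms(1,2), of n] unfolding vanishes_below_def by simp
  qed
  then have "(\<lambda>n. fls_nth (qrat (convergent_cf x (Suc n))) (int k)) \<longlonglongrightarrow> fls_nth (qconv t N) (int k)"
    by (intro tendsto_eventually) (auto simp: eventually_sequentially)
  then show ?thesis
    unfolding qreal_def by (simp add: limI)
qed

lemma vanishes_below_qreal_qconv:
  assumes "cf_terms x = t" "\<forall>i. 1 \<le> t i" "3 \<le> N"
  shows "vanishes_below (int N - 2) (fps_to_fls (qreal x) - qconv t N)"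
  unfolding vanishes_below_def
proof (intro allI impI)
  fix k :: int
  assume k: "k < int N - 2"
  show "fls_nth (fps_to_fls (qreal x) - qconv t N) k = 0"
  proof (cases "k < 0")
    case True
    then show ?thesis
      using fls_subdegree_qconv[OF assms(2), of N] assms(3) by simp
  next
    case False
    then show ?thesis
      using qreal_nth_eq_qconv[OF assms(1,2), of "nat k" N] k by simp
  qed
qed

lemma qreal_quadratic_eqI:
  fixes A B C :: "real fps"
  assumes "cf_terms x = t" "\<forall>i. 1 \<le> t i"
    and "\<And>n. 2 \<le> n \<Longrightarrow> vanishes_below (int n - 2)
      (fps_to_fls A * qconv t n ^ 2 - fps_to_fls B * qconv t n - fps_to_fls C)"
  shows "A * qreal x ^ 2 - B * qreal x = C"
proof -
  define E where "E y = fps_to_fls A * y ^ 2 - fps_to_fls B * y - fps_to_fls C" for y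
  define S where "S = fps_to_fls (qreal x)"
  have close: "vanishes_below (int N - 2) (E S)" if N: "3 \<le> N" for N
  proof -
    let ?V = "qconv t N"
    have "vanishes_below 0 ?V"
      using vanishes_below_subdegree[of ?V] fls_subdegree_qconv[OF assms(2), of N] N by simp
    then have "vanishes_below (0 + 0) (fps_to_fls A * (S + ?V))"
      unfolding S_def by (intro vanishes_below_mult vanishes_below_add vanishes_below_fps_to_fls)
    then have "vanishes_below 0 (fps_to_fls A * (S + ?V) - fps_to_fls B)"
      by (simp add: vanishes_below_diff vanishes_below_fps_to_fls)
    with vanishes_below_qreal_qconv[OF assms(1,2) N]
    have "vanishes_below (int N - 2 + 0) ((S - ?V) * (fps_to_fls A * (S + ?V) - fps_to_fls B))"
      unfolding S_def by (rule vanishes_below_mult)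
    moreover have "(S - ?V) * (fps_to_fls A * (S + ?V) - fps_to_fls B) = E S - E ?V"
      unfolding E_def by (simp add: algebra_simps power2_eq_square)
    moreover have "vanishes_below (int N - 2) (E ?V)"
      using assms(3) N unfolding E_def by simp
    ultimately show ?thesis
      using vanishes_below_add[of "int N - 2" "E S - E ?V" "E ?V"] by simp
  qed
  have "E S = 0"
  proof (rule vanishes_below_eq_0)
    fix M :: int
    have "vanishes_below (int (nat (max 3 (M + 2))) - 2) (E S)"
      by (rule close) simp
    then show "vanishes_below M (E S)"
      by (rule vanishes_below_mono) linarith
  qed
  then have "fps_to_fls (A * qreal x ^ 2 - B * qreal x - C) = 0"
    unfolding E_def S_def by (simp add: fls_times_fps_to_fls fps_to_fls_power)
  then have "A * qreal x ^ 2 - B * qreal x - C = 0"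
    by (simp only: fps_to_fls_eq_0_iff)
  then show ?thesis
    by simp
qed

definition periodic_cf :: "nat \<Rightarrow> nat list \<Rightarrow> nat \<Rightarrow> nat" where
  "periodic_cf a bs i = (if i = 0 then a else bs ! ((i - 1) mod length bs))"

lemma map_periodic_cf:
  "map (periodic_cf a bs) [0..<Suc m] = a # map (\<lambda>i. bs ! (i mod length bs)) [0..<m]"
  by (simp add: periodic_cf_def map_upt_Suc del: upt_Suc)

lemma map_nth_mod_length_append:
  "map (\<lambda>i. bs ! (i mod length bs)) [0..<length bs + m] = bs @ map (\<lambda>i. bs ! (i mod length bs)) [0..<m]"
proof -
  have "[0..<length bs + m] = [0..<length bs] @ map (\<lambda>i. i + length bs) [0..<m]"
    using upt_add_eq_append[of 0 "length bs" m] map_add_upt[of "length bs" m] by (simp add: add.commute)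
  moreover have "map (\<lambda>i. bs ! (i mod length bs)) [0..<length bs] = bs"
    by (rule nth_equalityI) simp_all
  ultimately show ?thesis
    by simp
qed

lemma cf_terms_periodic_cfI:
  fixes x :: real and gs :: "real list"
  assumes "bs \<noteq> []" "length gs = length bs"
    and "\<lfloor>x\<rfloor> = int a" "(x - a) * gs ! 0 = 1"
    and "\<And>k. k < length bs \<Longrightarrow>
      \<lfloor>gs ! k\<rfloor> = int (bs ! k) \<and> (gs ! k - bs ! k) * gs ! (Suc k mod length bs) = 1"
  shows "cf_terms x = periodic_cf a bs"
proof -
  have inverse: "1 / y = z" if "y * z = 1" for y z :: real
    using that by (auto simp: divide_eq_eq mult.commute)
  have rem: "cf_rem x (Suc n) = gs ! (n mod length bs)" for n
  proof (induction n)
    case 0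
    then show ?case
      using assms(3,4) by (simp add: inverse)
  next
    case (Suc n)
    have "n mod length bs < length bs"
      using assms(1) by simp
    then show ?case
      using Suc assms(5)[of "n mod length bs"] by (simp add: inverse mod_Suc_eq)
  qed
  show ?thesis
  proof
    fix i
    show "cf_terms x i = periodic_cf a bs i"
    proof (cases i)
      case 0
      then show ?thesis
        using assms(3) by (simp add: cf_terms_def periodic_cf_def)
    next
      case (Suc n)
      then show ?thesis
        using assms(1) assms(5)[of "n mod length bs"] unfolding cf_terms_def Suc rem
        by (simp add: periodic_cf_def)
    qed
  qed
qed

text \<open>Since (c1 - c0) u w = q (w - u), a multiple of the defect w - u of one period is a
  multiple of c1 - c0.\<close>

lemma quadratic_residual_eq:
  fixes w u c0 c1 p q a b c g Z :: "'a::field"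
  assumes "w \<noteq> 0" "c0 * w = p * w + q" "c1 * u = p * u + q"
    and "g * (a * (p * w + q) ^ 2 - b * (p * w + q) * w - c * w ^ 2) = - (q * Z * (w - u) * w)"
  shows "(a * c0 ^ 2 - b * c0 - c) * g = (c1 - c0) * - (u * Z)"
proof -
  have "(a * c0 ^ 2 - b * c0 - c) * g * w ^ 2 = (c1 - c0) * - (u * Z) * w ^ 2"
    using assms(2-4) by algebra
  then show ?thesis
    by (rule mult_right_cancel[OF power_not_zero[OF assms(1)], THEN iffD1])
qed

lemma qreal_periodic_quadratic:
  fixes A B C :: "real fps" and g :: "real fls"
  assumes x: "cf_terms x = periodic_cf a bs" and "1 \<le> a" "bs \<noteq> []" "\<forall>b\<in>set bs. 1 \<le> b"
    and g: "fls_nth g k \<noteq> 0"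
    and residual: "\<And>r. r \<noteq> [] \<Longrightarrow> \<forall>b\<in>set r. 1 \<le> b \<Longrightarrow> \<exists>h. vanishes_below k h \<and>
      (fps_to_fls A * qcf True (a # r) ^ 2 - fps_to_fls B * qcf True (a # r) - fps_to_fls C) * g
        = (qcf True (a # bs @ r) - qcf True (a # r)) * h"
  shows "A * qreal x ^ 2 - B * qreal x = C"
proof (rule qreal_quadratic_eqI[OF x])
  let ?t = "periodic_cf a bs"
  show pos: "\<forall>i. 1 \<le> ?t i"
    using assms(2-4) by (auto simp: periodic_cf_def)
  fix n :: nat
  assume "2 \<le> n"
  then obtain m where n: "n = Suc m" "1 \<le> m"
    by (cases n) auto
  define r where "r = map (\<lambda>i. bs ! (i mod length bs)) [0..<m]"
  have r: "r \<noteq> []" "\<forall>b\<in>set r. 1 \<le> b"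
    using n(2) assms(3,4) by (auto simp: r_def)
  have conv: "qconv ?t n = qcf True (a # r)" "qconv ?t (n + length bs) = qcf True (a # bs @ r)"
    unfolding qconv_def n r_def
    by (simp_all only: add_Suc map_periodic_cf add.commute[of m] map_nth_mod_length_append)
  obtain h where h: "vanishes_below k h"
    "(fps_to_fls A * qconv ?t n ^ 2 - fps_to_fls B * qconv ?t n - fps_to_fls C) * g
       = (qconv ?t (n + length bs) - qconv ?t n) * h"
    using residual[OF r] unfolding conv by blast
  have "vanishes_below (int n - 2) (qconv ?t (n + length bs) - qconv ?t n)"
    using vanishes_below_qconv_diff[OF pos, of n "n + length bs"] n by simp
  from vanishes_below_mult[OF this h(1)]
  have "vanishes_below (int n - 2 + k)
      ((fps_to_fls A * qconv ?t n ^ 2 - fps_to_fls B * qconv ?t n - fps_to_fls C) * g)"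
    unfolding h(2) .
  from vanishes_below_cancel[OF this g]
  show "vanishes_below (int n - 2) (fps_to_fls A * qconv ?t n ^ 2 - fps_to_fls B * qconv ?t n - fps_to_fls C)"
    by simp
qed

lemma fls_X_times_X_inv: "fls_X * fls_X_inv = (1 :: 'a::field fls)"
  by (metis fls_inverse_X fls_X_nonzero right_inverse)

lemma cf_terms_sqrt2: "cf_terms (sqrt 2) = periodic_cf 1 [2, 2]"
proof -
  have "14/10 < sqrt (2::real)"
    by (rule real_less_rsqrt) (simp add: power2_eq_square)
  moreover have "sqrt (2::real) < 15/10"
    by (rule real_less_lsqrt) (simp_all add: power2_eq_square)
  ultimately show ?thesis
    by (intro cf_terms_periodic_cfI[where gs = "[sqrt 2 + 1, sqrt 2 + 1]"])
      (auto simp: floor_eq_iff less_Suc_eq algebra_simps)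
qed

text \<open>In the four identities below w is the tail at level q^-1, u the same tail one period
  later, and z (resp. z3, z2, z1) the intermediate tails; eliminating them leaves a polynomial
  identity in w.\<close>

lemma sqrt2_moebius_identity:
  fixes q r w z u :: "'a::field"
  assumes "z * w = (1 + q) * w + q ^ 2" "u * z = (1 + r) * z + r ^ 2" "q * r = 1"
  shows "(1 + q) * (q ^ 2 * (1 * w + q) ^ 2 - (q ^ 3 - 1) * (1 * w + q) * w - (q ^ 2 + 1) * w ^ 2)
      = - (q * (q ^ 2 * z) * (w - u) * w)"
  using assms by algebra

lemma sqrt2_residual:
  assumes "r \<noteq> []" "\<forall>b\<in>set r. 1 \<le> b"
  shows "\<exists>h. vanishes_below 0 h \<and>
    (fls_X ^ 2 * qcf True (1 # r) ^ 2 - (fls_X ^ 3 - 1) * qcf True (1 # r) - (fls_X ^ 2 + 1)) * (1 + fls_X)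
      = (qcf True (1 # [2, 2] @ r) - qcf True (1 # r)) * h"
proof -
  define w z u where "w = qcf False r" "z = qcf True (2 # r)" "u = qcf False (2 # 2 # r)"
  have rel: "qcf True (1 # r) * w = 1 * w + fls_X" "z * w = (1 + fls_X) * w + fls_X ^ 2"
    "u * z = (1 + fls_X_inv) * z + fls_X_inv ^ 2" "qcf True (1 # [2, 2] @ r) * u = 1 * u + fls_X"
    using qcf_Cons_mult[of r True 1] qcf_Cons_mult[of r True 2] qcf_Cons_mult[of "2 # r" False 2]
      qcf_Cons_mult[of "2 # 2 # r" True 1] assms
    unfolding w_z_u_def by (simp_all add: qint_def qpow_def eval_nat_numeral)
  from quadratic_residual_eq[OF _ rel(1,4) sqrt2_moebius_identity[OF rel(2,3) fls_X_times_X_inv]]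
  have "(fls_X ^ 2 * qcf True (1 # r) ^ 2 - (fls_X ^ 3 - 1) * qcf True (1 # r) - (fls_X ^ 2 + 1)) * (1 + fls_X)
      = (qcf True (1 # [2, 2] @ r) - qcf True (1 # r)) * - (u * (fls_X ^ 2 * z))"
    using assms by (simp add: w_z_u_def qcf_nonzero)
  moreover have "vanishes_below 0 (- (u * (fls_X ^ 2 * z)))"
  proof -
    have "u \<noteq> 0" "z \<noteq> 0"
      unfolding w_z_u_def using assms by (intro qcf_nonzero; simp)+
    moreover have "fls_subdegree u = -2" "fls_subdegree z = 0"
      unfolding w_z_u_def using assms fls_subdegree_qcf_False_Cons[of "2 # r" 2]
      by (simp_all add: fls_subdegree_qcf_True)
    ultimately show ?thesis
      by (simp add: vanishes_below_iff)
  qed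
  ultimately show ?thesis
    by blast
qed

lemma qreal_sqrt2: "fps_X ^ 2 * qreal (sqrt 2) ^ 2 - (fps_X ^ 3 - 1) * qreal (sqrt 2) = fps_X ^ 2 + 1"
proof (rule qreal_periodic_quadratic[OF cf_terms_sqrt2, where g = "1 + fls_X" and k = 0])
  fix r :: "nat list"
  assume "r \<noteq> []" "\<forall>b\<in>set r. 1 \<le> b"
  then show "\<exists>h. vanishes_below 0 h \<and>
    (fps_to_fls (fps_X ^ 2) * qcf True (1 # r) ^ 2 - fps_to_fls (fps_X ^ 3 - 1) * qcf True (1 # r)
      - fps_to_fls (fps_X ^ 2 + 1)) * (1 + fls_X) = (qcf True (1 # [2, 2] @ r) - qcf True (1 # r)) * h"
    using sqrt2_residual by (simp add: fps_to_fls_power)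
qed simp_all

lemma cf_terms_sqrt3: "cf_terms (sqrt 3) = periodic_cf 1 [1, 2]"
proof -
  have "17/10 < sqrt (3::real)"
    by (rule real_less_rsqrt) (simp add: power2_eq_square)
  moreover have "sqrt (3::real) < 18/10"
    by (rule real_less_lsqrt) (simp_all add: power2_eq_square)
  ultimately show ?thesis
    by (intro cf_terms_periodic_cfI[where gs = "[(sqrt 3 + 1) / 2, sqrt 3 + 1]"])
      (auto simp: floor_eq_iff less_Suc_eq field_simps)
qed

lemma sqrt3_moebius_identity:
  fixes q r w z u :: "'a::field"
  assumes "z * w = (1 + q) * w + q ^ 2" "u * z = 1 * z + r" "q * r = 1"
  shows "q * (q ^ 2 * (1 * w + q) ^ 2 - (q ^ 3 + q ^ 2 - q - 1) * (1 * w + q) * w - (q ^ 2 + q + 1) * w ^ 2)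
      = - (q * (q ^ 2 * z) * (w - u) * w)"
  using assms by algebra

lemma sqrt3_residual:
  assumes "r \<noteq> []" "\<forall>b\<in>set r. 1 \<le> b"
  shows "\<exists>h. vanishes_below 1 h \<and>
    (fls_X ^ 2 * qcf True (1 # r) ^ 2 - (fls_X ^ 3 + fls_X ^ 2 - fls_X - 1) * qcf True (1 # r)
      - (fls_X ^ 2 + fls_X + 1)) * fls_X
      = (qcf True (1 # [1, 2] @ r) - qcf True (1 # r)) * h"
proof -
  define w z u where "w = qcf False r" "z = qcf True (2 # r)" "u = qcf False (1 # 2 # r)"
  have rel: "qcf True (1 # r) * w = 1 * w + fls_X" "z * w = (1 + fls_X) * w + fls_X ^ 2"
    "u * z = 1 * z + fls_X_inv" "qcf True (1 # [1, 2] @ r) * u = 1 * u + fls_X"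
    using qcf_Cons_mult[of r True 1] qcf_Cons_mult[of r True 2] qcf_Cons_mult[of "2 # r" False 1]
      qcf_Cons_mult[of "1 # 2 # r" True 1] assms
    unfolding w_z_u_def by (simp_all add: qint_def qpow_def eval_nat_numeral)
  from quadratic_residual_eq[OF _ rel(1,4) sqrt3_moebius_identity[OF rel(2,3) fls_X_times_X_inv]]
  have "(fls_X ^ 2 * qcf True (1 # r) ^ 2 - (fls_X ^ 3 + fls_X ^ 2 - fls_X - 1) * qcf True (1 # r)
      - (fls_X ^ 2 + fls_X + 1)) * fls_X
      = (qcf True (1 # [1, 2] @ r) - qcf True (1 # r)) * - (u * (fls_X ^ 2 * z))"
    using assms by (simp add: w_z_u_def qcf_nonzero)
  moreover have "vanishes_below 1 (- (u * (fls_X ^ 2 * z)))"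
  proof -
    have "u \<noteq> 0" "z \<noteq> 0"
      unfolding w_z_u_def using assms by (intro qcf_nonzero; simp)+
    moreover have "fls_subdegree u = -1" "fls_subdegree z = 0"
      unfolding w_z_u_def using assms fls_subdegree_qcf_False_Cons[of "2 # r" 1]
      by (simp_all add: fls_subdegree_qcf_True)
    ultimately show ?thesis
      by (simp add: vanishes_below_iff)
  qed
  ultimately show ?thesis
    by blast
qed

lemma qreal_sqrt3:
  "fps_X ^ 2 * qreal (sqrt 3) ^ 2 - (fps_X ^ 3 + fps_X ^ 2 - fps_X - 1) * qreal (sqrt 3)
     = fps_X ^ 2 + fps_X + 1"
proof (rule qreal_periodic_quadratic[OF cf_terms_sqrt3, where g = fls_X and k = 1])
  fix r :: "nat list"
  assume "r \<noteq> []" "\<forall>b\<in>set r. 1 \<le> b"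
  then show "\<exists>h. vanishes_below 1 h \<and>
    (fps_to_fls (fps_X ^ 2) * qcf True (1 # r) ^ 2
      - fps_to_fls (fps_X ^ 3 + fps_X ^ 2 - fps_X - 1) * qcf True (1 # r)
      - fps_to_fls (fps_X ^ 2 + fps_X + 1)) * fls_X = (qcf True (1 # [1, 2] @ r) - qcf True (1 # r)) * h"
    using sqrt3_residual by (simp add: fps_to_fls_power)
qed simp_all

lemma cf_terms_sqrt5: "cf_terms (sqrt 5) = periodic_cf 2 [4, 4]"
proof -
  have "22/10 < sqrt (5::real)"
    by (rule real_less_rsqrt) (simp add: power2_eq_square)
  moreover have "sqrt (5::real) < 23/10"
    by (rule real_less_lsqrt) (simp_all add: power2_eq_square)
  ultimately show ?thesis
    by (intro cf_terms_periodic_cfI[where gs = "[sqrt 5 + 2, sqrt 5 + 2]"])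
      (auto simp: floor_eq_iff less_Suc_eq algebra_simps)
qed

lemma sqrt5_moebius_identity:
  fixes q r w z u :: "'a::field"
  assumes "z * w = (1 + q + q ^ 2 + q ^ 3) * w + q ^ 4" "u * z = (1 + r + r ^ 2 + r ^ 3) * z + r ^ 4"
    "q * r = 1"
  shows "(q ^ 2 + q + 1 + r) * (q ^ 3 * ((1 + q) * w + q ^ 2) ^ 2
      - (q ^ 5 + q ^ 3 - q ^ 2 - 1) * ((1 + q) * w + q ^ 2) * w - (q ^ 4 + q ^ 3 + q ^ 2 + q + 1) * w ^ 2)
      = - (q ^ 2 * (q ^ 3 * z) * (w - u) * w)"
  using assms by algebra

lemma sqrt5_residual:
  assumes "r \<noteq> []" "\<forall>b\<in>set r. 1 \<le> b"
  shows "\<exists>h. vanishes_below (-1) h \<and>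
    (fls_X ^ 3 * qcf True (2 # r) ^ 2 - (fls_X ^ 5 + fls_X ^ 3 - fls_X ^ 2 - 1) * qcf True (2 # r)
      - (fls_X ^ 4 + fls_X ^ 3 + fls_X ^ 2 + fls_X + 1)) * (fls_X ^ 2 + fls_X + 1 + fls_X_inv)
      = (qcf True (2 # [4, 4] @ r) - qcf True (2 # r)) * h"
proof -
  define w z u where "w = qcf False r" "z = qcf True (4 # r)" "u = qcf False (4 # 4 # r)"
  have rel: "qcf True (2 # r) * w = (1 + fls_X) * w + fls_X ^ 2"
    "z * w = (1 + fls_X + fls_X ^ 2 + fls_X ^ 3) * w + fls_X ^ 4"
    "u * z = (1 + fls_X_inv + fls_X_inv ^ 2 + fls_X_inv ^ 3) * z + fls_X_inv ^ 4"
    "qcf True (2 # [4, 4] @ r) * u = (1 + fls_X) * u + fls_X ^ 2"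
    using qcf_Cons_mult[of r True 2] qcf_Cons_mult[of r True 4] qcf_Cons_mult[of "4 # r" False 4]
      qcf_Cons_mult[of "4 # 4 # r" True 2] assms
    unfolding w_z_u_def by (simp_all add: qint_def qpow_def eval_nat_numeral)
  from quadratic_residual_eq[OF _ rel(1,4) sqrt5_moebius_identity[OF rel(2,3) fls_X_times_X_inv]]
  have "(fls_X ^ 3 * qcf True (2 # r) ^ 2 - (fls_X ^ 5 + fls_X ^ 3 - fls_X ^ 2 - 1) * qcf True (2 # r)
      - (fls_X ^ 4 + fls_X ^ 3 + fls_X ^ 2 + fls_X + 1)) * (fls_X ^ 2 + fls_X + 1 + fls_X_inv)
      = (qcf True (2 # [4, 4] @ r) - qcf True (2 # r)) * - (u * (fls_X ^ 3 * z))"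
    using assms by (simp add: w_z_u_def qcf_nonzero)
  moreover have "vanishes_below (-1) (- (u * (fls_X ^ 3 * z)))"
  proof -
    have "u \<noteq> 0" "z \<noteq> 0"
      unfolding w_z_u_def using assms by (intro qcf_nonzero; simp)+
    moreover have "fls_subdegree u = -4" "fls_subdegree z = 0"
      unfolding w_z_u_def using assms fls_subdegree_qcf_False_Cons[of "4 # r" 4]
      by (simp_all add: fls_subdegree_qcf_True)
    ultimately show ?thesis
      by (simp add: vanishes_below_iff)
  qed
  ultimately show ?thesis
    by blast
qed

lemma qreal_sqrt5:
  "fps_X ^ 3 * qreal (sqrt 5) ^ 2 - (fps_X ^ 5 + fps_X ^ 3 - fps_X ^ 2 - 1) * qreal (sqrt 5)
     = fps_X ^ 4 + fps_X ^ 3 + fps_X ^ 2 + fps_X + 1"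
proof (rule qreal_periodic_quadratic[OF cf_terms_sqrt5,
      where g = "fls_X ^ 2 + fls_X + 1 + fls_X_inv" and k = "-1"])
  fix r :: "nat list"
  assume "r \<noteq> []" "\<forall>b\<in>set r. 1 \<le> b"
  then show "\<exists>h. vanishes_below (-1) h \<and>
    (fps_to_fls (fps_X ^ 3) * qcf True (2 # r) ^ 2
      - fps_to_fls (fps_X ^ 5 + fps_X ^ 3 - fps_X ^ 2 - 1) * qcf True (2 # r)
      - fps_to_fls (fps_X ^ 4 + fps_X ^ 3 + fps_X ^ 2 + fps_X + 1)) * (fls_X ^ 2 + fls_X + 1 + fls_X_inv)
      = (qcf True (2 # [4, 4] @ r) - qcf True (2 # r)) * h"
    using sqrt5_residual by (simp add: fps_to_fls_power)
qed simp_all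

lemma cf_terms_sqrt7: "cf_terms (sqrt 7) = periodic_cf 2 [1, 1, 1, 4]"
proof -
  have "26/10 < sqrt (7::real)"
    by (rule real_less_rsqrt) (simp add: power2_eq_square)
  moreover have "sqrt (7::real) < 27/10"
    by (rule real_less_lsqrt) (simp_all add: power2_eq_square)
  ultimately show ?thesis
    by (intro cf_terms_periodic_cfI[where
          gs = "[(sqrt 7 + 2) / 3, (sqrt 7 + 1) / 2, (sqrt 7 + 1) / 3, sqrt 7 + 2]"])
      (auto simp: floor_eq_iff less_Suc_eq field_simps)
qed

lemma sqrt7_moebius_identity:
  fixes q r w z1 z2 z3 u :: "'a::field"
  assumes "z3 * w = (1 + q + q ^ 2 + q ^ 3) * w + q ^ 4" "z2 * z3 = 1 * z3 + r" "z1 * z2 = 1 * z2 + q"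
    "u * z1 = 1 * z1 + r" "q * r = 1"
  shows "(q + q ^ 2 + q ^ 3) * (q ^ 3 * ((1 + q) * w + q ^ 2) ^ 2
      - (q ^ 5 + q ^ 4 - q - 1) * ((1 + q) * w + q ^ 2) * w - (q ^ 4 + 2 * q ^ 3 + q ^ 2 + 2 * q + 1) * w ^ 2)
      = - (q ^ 2 * (q ^ 3 * z1 * z2 * z3) * (w - u) * w)"
  using assms by algebra

lemma sqrt7_residual:
  assumes "r \<noteq> []" "\<forall>b\<in>set r. 1 \<le> b"
  shows "\<exists>h. vanishes_below 1 h \<and>
    (fls_X ^ 3 * qcf True (2 # r) ^ 2 - (fls_X ^ 5 + fls_X ^ 4 - fls_X - 1) * qcf True (2 # r)
      - (fls_X ^ 4 + 2 * fls_X ^ 3 + fls_X ^ 2 + 2 * fls_X + 1)) * (fls_X + fls_X ^ 2 + fls_X ^ 3)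
      = (qcf True (2 # [1, 1, 1, 4] @ r) - qcf True (2 # r)) * h"
proof -
  define w z3 z2 z1 u where "w = qcf False r" "z3 = qcf True (4 # r)" "z2 = qcf False (1 # 4 # r)"
    "z1 = qcf True (1 # 1 # 4 # r)" "u = qcf False (1 # 1 # 1 # 4 # r)"
  note defs = w_z3_z2_z1_u_def
  have rel: "qcf True (2 # r) * w = (1 + fls_X) * w + fls_X ^ 2"
    "z3 * w = (1 + fls_X + fls_X ^ 2 + fls_X ^ 3) * w + fls_X ^ 4"
    "z2 * z3 = 1 * z3 + fls_X_inv" "z1 * z2 = 1 * z2 + fls_X" "u * z1 = 1 * z1 + fls_X_inv"
    "qcf True (2 # [1, 1, 1, 4] @ r) * u = (1 + fls_X) * u + fls_X ^ 2"
    using qcf_Cons_mult[of r True 2] qcf_Cons_mult[of r True 4] qcf_Cons_mult[of "4 # r" False 1]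
      qcf_Cons_mult[of "1 # 4 # r" True 1] qcf_Cons_mult[of "1 # 1 # 4 # r" False 1]
      qcf_Cons_mult[of "1 # 1 # 1 # 4 # r" True 2] assms
    unfolding defs by (simp_all add: qint_def qpow_def eval_nat_numeral)
  from quadratic_residual_eq[OF _ rel(1,6) sqrt7_moebius_identity[OF rel(2-5) fls_X_times_X_inv]]
  have "(fls_X ^ 3 * qcf True (2 # r) ^ 2 - (fls_X ^ 5 + fls_X ^ 4 - fls_X - 1) * qcf True (2 # r)
      - (fls_X ^ 4 + 2 * fls_X ^ 3 + fls_X ^ 2 + 2 * fls_X + 1)) * (fls_X + fls_X ^ 2 + fls_X ^ 3)
      = (qcf True (2 # [1, 1, 1, 4] @ r) - qcf True (2 # r)) * - (u * (fls_X ^ 3 * z1 * z2 * z3))"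
    using assms by (simp add: defs qcf_nonzero)
  moreover have "vanishes_below 1 (- (u * (fls_X ^ 3 * z1 * z2 * z3)))"
  proof -
    have "u \<noteq> 0" "z1 \<noteq> 0" "z2 \<noteq> 0" "z3 \<noteq> 0"
      unfolding defs using assms by (intro qcf_nonzero; simp)+
    moreover have "fls_subdegree u = -1" "fls_subdegree z1 = 0" "fls_subdegree z2 = -1"
      "fls_subdegree z3 = 0"
      unfolding defs using assms fls_subdegree_qcf_False_Cons[of "1 # 1 # 4 # r" 1]
        fls_subdegree_qcf_False_Cons[of "4 # r" 1] fls_subdegree_qcf_True[of "1 # 1 # 4 # r"]
        fls_subdegree_qcf_True[of "4 # r"]
      by simp_all
    ultimately show ?thesis
      by (simp add: vanishes_below_iff)
  qed
  ultimately show ?thesis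
    by blast
qed

lemma qreal_sqrt7:
  "fps_X ^ 3 * qreal (sqrt 7) ^ 2 - (fps_X ^ 5 + fps_X ^ 4 - fps_X - 1) * qreal (sqrt 7)
     = fps_X ^ 4 + 2 * fps_X ^ 3 + fps_X ^ 2 + 2 * fps_X + 1"
proof (rule qreal_periodic_quadratic[OF cf_terms_sqrt7,
      where g = "fls_X + fls_X ^ 2 + fls_X ^ 3" and k = 1])
  fix r :: "nat list"
  assume "r \<noteq> []" "\<forall>b\<in>set r. 1 \<le> b"
  then show "\<exists>h. vanishes_below 1 h \<and>
    (fps_to_fls (fps_X ^ 3) * qcf True (2 # r) ^ 2
      - fps_to_fls (fps_X ^ 5 + fps_X ^ 4 - fps_X - 1) * qcf True (2 # r)
      - fps_to_fls (fps_X ^ 4 + 2 * fps_X ^ 3 + fps_X ^ 2 + 2 * fps_X + 1)) * (fls_X + fls_X ^ 2 + fls_X ^ 3)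
      = (qcf True (2 # [1, 1, 1, 4] @ r) - qcf True (2 # r)) * h"
    using sqrt7_residual by (simp add: fps_to_fls_power fls_times_fps_to_fls)
qed simp_all

theorem proposition4p3:
  shows "(fps_X ^ 2 * qreal (sqrt 2) ^ 2 - (fps_X ^ 3 - 1) * qreal (sqrt 2) = fps_X ^ 2 + 1) \<and>
    (fps_X ^ 2 * qreal (sqrt 3) ^ 2 - (fps_X ^ 3 + fps_X ^ 2 - fps_X - 1) * qreal (sqrt 3)
           = fps_X ^ 2 + fps_X + 1) \<and>
    (fps_X ^ 3 * qreal (sqrt 5) ^ 2 - (fps_X ^ 5 + fps_X ^ 3 - fps_X ^ 2 - 1) * qreal (sqrt 5)
           = fps_X ^ 4 + fps_X ^ 3 + fps_X ^ 2 + fps_X + 1) \<and>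
    (fps_X ^ 3 * qreal (sqrt 7) ^ 2 - (fps_X ^ 5 + fps_X ^ 4 - fps_X - 1) * qreal (sqrt 7)
           = fps_X ^ 4 + 2 * fps_X ^ 3 + fps_X ^ 2 + 2 * fps_X + 1)"
  using qreal_sqrt2 qreal_sqrt3 qreal_sqrt5 qreal_sqrt7 by blast

end
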